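(* For any $t\in(0,1)$ there exists a real symmetric matrix $\mathbf{A}$ of size $\lceil(4t)^{-1}\rceil$ such that, for any positive integers $n_{\mathrm{v}},k$ with $n_{\mathrm{v}}k<(8t)^{-1}$ (i.e. stochastic Lanczos quadrature using fewer than $(8t)^{-1}$ matrix–vector products) and any unit vectors $\mathbf{v}_1,\dots,\mathbf{v}_{n_{\mathrm{v}}}$, the output satisfies $$d_{\mathrm{W}}\Big(\Phi[\mathbf{A}],\tfrac1{n_{\mathrm{v}}}\textstyle\sum_{i=1}^{n_{\mathrm{v}}}\mathrm{GQ}_k(\Psi[\mathbf{A},\mathbf{v}_i])\Big)>t\,I[\mathbf{A}],$$ where $I[\mathbf{A}]=|\lambda_{\max}[\mathbf{A}]-\lambda_{\min}[\mathbf{A}]|$.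
   Context: $\Phi[\mathbf{A}](x)=\frac1n\#\{i:\lambda_i[\mathbf{A}]\le x\}$ is the CESM of an $n\times n$ symmetric $\mathbf{A}$; $\Psi[\mathbf{A},\mathbf{v}](x)=\mathbf{v}^{\mathsf T}\mathbb{1}[\mathbf{A}\le x]\mathbf{v}$ where $\mathbb{1}[\mathbf{A}\le x]$ is the orthogonal projector onto eigenvectors with eigenvalues $\le x$. $\mathrm{GQ}_k(\mu)$ is the $k$-point Gaussian quadrature rule of $\mu$ (the discrete distribution $\sum_{j=1}^k d_j\mathbb{1}[\theta_j\le x]$ whose moments agree with those of $\mu$ up to degree $2k-1$), which for $\mu=\Psi[\mathbf{A},\mathbf{v}]$ is computed from $k$ steps of the Lanczos algorithm (using $k$ matrix–vector products). $d_{\mathrm{W}}(\mu,\nu)=\int|\mu(x)-\nu(x)|\,dx$. *)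

theory Defs
  imports "HOL-Analysis.Analysis"
begin

definition sym_mat :: "real^'n^'n \<Rightarrow> bool" where
  "sym_mat A \<longleftrightarrow> transpose A = A"

text \<open>lam is a list (with multiplicity) of the eigenvalues of A: there is an
  orthonormal eigenbasis U with A U_i = lam_i U_i.\<close>
definition is_eig_list :: "real^'n^'n \<Rightarrow> ('n \<Rightarrow> real) \<Rightarrow> bool" where
  "is_eig_list A lam \<longleftrightarrow> (\<exists>U :: 'n \<Rightarrow> real^'n.
      (\<forall>i j. U i \<bullet> U j = (if i = j then 1 else 0)) \<and> (\<forall>i. A *v U i = lam i *\<^sub>R U i))"

definition eigvals :: "real^'n^'n \<Rightarrow> 'n \<Rightarrow> real" where
  "eigvals A = (SOME lam. is_eig_list A lam)"

definition lam_max :: "real^'n^'n \<Rightarrow> real" where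
  "lam_max A = Max (range (eigvals A))"

definition lam_min :: "real^'n^'n \<Rightarrow> real" where
  "lam_min A = Min (range (eigvals A))"

definition CESM :: "real^'n^'n \<Rightarrow> real \<Rightarrow> real" where
  "CESM A x = real (card {i. eigvals A i \<le> x}) / real CARD('n)"

definition orth_proj :: "(real^'n) set \<Rightarrow> real^'n \<Rightarrow> real^'n" where
  "orth_proj S v = (THE w. w \<in> S \<and> (\<forall>u\<in>S. (v - w) \<bullet> u = 0))"

definition eig_le_space :: "real^'n^'n \<Rightarrow> real \<Rightarrow> (real^'n) set" where
  "eig_le_space A x = span {u. \<exists>l\<le>x. A *v u = l *\<^sub>R u}"

definition WCESM :: "real^'n^'n \<Rightarrow> real^'n \<Rightarrow> real \<Rightarrow> real" where
  "WCESM A v x = v \<bullet> orth_proj (eig_le_space A x) v"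

definition step_dist :: "nat \<Rightarrow> (nat \<Rightarrow> real) \<Rightarrow> (nat \<Rightarrow> real) \<Rightarrow> real \<Rightarrow> real" where
  "step_dist k d \<theta> x = (\<Sum>j<k. d j * (if \<theta> j \<le> x then 1 else 0))"

text \<open>p-th moment of a distribution given by its (nondecreasing, right-continuous)
  distribution function mu: the Lebesgue-Stieltjes integral of x^p d mu(x).\<close>
definition moment :: "(real \<Rightarrow> real) \<Rightarrow> nat \<Rightarrow> real" where
  "moment \<mu> p = integral\<^sup>L (interval_measure \<mu>) (\<lambda>x. x ^ p)"

definition GQ :: "nat \<Rightarrow> (real \<Rightarrow> real) \<Rightarrow> real \<Rightarrow> real" where
  "GQ k \<mu> = (THE G. (\<exists>d \<theta>. (\<forall>j. 0 \<le> d j) \<and> G = step_dist k d \<theta>) \<and>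
                     (\<forall>p < 2 * k. moment G p = moment \<mu> p))"

definition dW :: "(real \<Rightarrow> real) \<Rightarrow> (real \<Rightarrow> real) \<Rightarrow> real" where
  "dW \<mu> \<nu> = integral\<^sup>L lborel (\<lambda>x. \<bar>\<mu> x - \<nu> x\<bar>)"

end

(* Take A = diag(0, 1, ..., n - 1) with n = ceiling(1/(4t)), so that t I[A] = t (n - 1) < 1/4 and
   Phi[A] is the uniform distribution on {0, ..., n - 1}. For diagonal A, Psi[A, v] puts mass v_i^2
   on the eigenvalue i; its Gaussian quadrature rule exists and is unique (the nodes are the roots of
   the degree-k orthogonal polynomial, which are real and simple), so the output of the method is a
   probability distribution with at most n_v k < n/2 atoms. Every integer c < n at distance at least
   1/2 from all atoms contributes at least 1/(2n) to d_W, because near c the uniform distribution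
   function jumps by 1/n while the output is constant; more than n/2 such integers give d_W > 1/4. *)

theory Submission
  imports Defs "HOL-Probability.Distribution_Functions" "HOL-Computational_Algebra.Polynomial"
begin

definition step_cdf :: "'a set \<Rightarrow> ('a \<Rightarrow> real) \<Rightarrow> ('a \<Rightarrow> real) \<Rightarrow> real \<Rightarrow> real" where
  "step_cdf J w a x = (\<Sum>j\<in>J. w j * (if a j \<le> x then 1 else 0))"

lemma step_dist_eq_step_cdf: "step_dist k d \<theta> = step_cdf {..<k} d \<theta>"
  unfolding step_dist_def[abs_def] step_cdf_def[abs_def] ..

lemma step_cdf_const_weight:
  "finite J \<Longrightarrow> step_cdf J (\<lambda>_. c) a x = c * real (card {j\<in>J. a j \<le> x})"
  unfolding step_cdf_def by (simp add: sum.inter_filter[symmetric] if_distrib cong: if_cong)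

lemma step_cdf_mono:
  assumes "\<forall>j\<in>J. 0 \<le> w j" "x \<le> y"
  shows "step_cdf J w a x \<le> step_cdf J w a y"
  unfolding step_cdf_def using assms by (intro sum_mono) auto

lemma continuous_at_right_step_cdf: "continuous (at_right x) (step_cdf J w a)"
proof -
  have "continuous (at_right x) (\<lambda>y. if c \<le> y then 1 else (0::real))" for c
  proof -
    have "\<forall>\<^sub>F y in at_right x. (if c \<le> y then 1 else (0::real)) = (if c \<le> x then 1 else 0)"
      by (cases "c \<le> x") (auto intro: eventually_at_rightI[of x "x + 1"] eventually_at_rightI[of x c])
    then show ?thesis
      unfolding continuous_within by (simp add: tendsto_eventually)
  qed
  then show ?thesis
    unfolding step_cdf_def[abs_def] by (intro continuous_sum continuous_mult continuous_const)
qed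

lemma step_cdf_eq_0:
  assumes "\<forall>j\<in>J. x < a j"
  shows "step_cdf J w a x = 0"
  unfolding step_cdf_def using assms by (intro sum.neutral) auto

lemma step_cdf_eq_mass:
  assumes "\<forall>j\<in>J. a j \<le> x"
  shows "step_cdf J w a x = sum w J"
  unfolding step_cdf_def using assms by (intro sum.cong) auto

lemma step_cdf_at_bot:
  assumes "finite J"
  shows "(step_cdf J w a \<longlongrightarrow> 0) at_bot"
proof -
  have "\<forall>\<^sub>F x in at_bot. step_cdf J w a x = 0"
    unfolding eventually_at_bot_dense
  proof (intro exI allI impI)
    fix x assume "x < Min (insert 0 (a ` J))"
    moreover have "\<forall>j\<in>J. Min (insert 0 (a ` J)) \<le> a j"
      using assms by auto
    ultimately show "step_cdf J w a x = 0"
      by (intro step_cdf_eq_0) fastforce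
  qed
  then show ?thesis by (simp add: tendsto_eventually)
qed

lemma step_cdf_at_top:
  assumes "finite J"
  shows "(step_cdf J w a \<longlongrightarrow> sum w J) at_top"
proof -
  have "\<forall>\<^sub>F x in at_top. step_cdf J w a x = sum w J"
    unfolding eventually_at_top_linorder
  proof (intro exI allI impI)
    fix x assume "Max (insert 0 (a ` J)) \<le> x"
    moreover have "\<forall>j\<in>J. a j \<le> Max (insert 0 (a ` J))"
      using assms by auto
    ultimately show "step_cdf J w a x = sum w J"
      by (intro step_cdf_eq_mass) fastforce
  qed
  then show ?thesis by (simp add: tendsto_eventually)
qed

lemma interval_measure_step_cdf:
  assumes J: "finite J" and w: "\<forall>j\<in>J. 0 \<le> w j"
  shows "interval_measure (step_cdf J w a) = distr (point_measure J w) borel a"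
proof -
  let ?F = "step_cdf J w a" and ?P = "point_measure J w"
  have mono: "\<And>x y. x \<le> y \<Longrightarrow> ?F x \<le> ?F y"
    using step_cdf_mono w by blast
  interpret P: finite_measure ?P
    by (rule finite_measureI) (simp add: emeasure_point_measure_finite J space_point_measure)
  have "finite_borel_measure (interval_measure ?F)"
    using w by (intro finite_borel_measure_interval_measure[OF mono continuous_at_right_step_cdf
        step_cdf_at_bot[OF J] step_cdf_at_top[OF J]]) (auto intro: sum_nonneg)
  moreover have "finite_borel_measure (distr ?P borel a)"
    unfolding finite_borel_measure_def finite_borel_measure_axioms_def
    by (auto intro!: P.finite_measure_distr)
  moreover have "cdf (distr ?P borel a) x = ?F x" for x
  proof -
    have "cdf (distr ?P borel a) x = measure ?P {j\<in>J. a j \<le> x}"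
      unfolding cdf_def by (simp add: measure_distr vimage_def Int_def space_point_measure conj_commute)
    also have "\<dots> = sum w {j\<in>J. a j \<le> x}"
      using J w by (subst measure_point_measure_finite_if) auto
    also have "\<dots> = ?F x"
      unfolding step_cdf_def using J
      by (simp add: sum.inter_filter[symmetric] if_distrib cong: if_cong)
    finally show ?thesis .
  qed
  ultimately show ?thesis
    by (intro cdf_unique') (simp_all add: fun_eq_iff cdf_interval_measure[OF mono continuous_at_right_step_cdf
        step_cdf_at_bot[OF J]])
qed

lemma moment_step_cdf:
  assumes "finite J" "\<forall>j\<in>J. 0 \<le> w j"
  shows "moment (step_cdf J w a) p = (\<Sum>j\<in>J. w j * a j ^ p)"
  using assms
  by (simp add: moment_def interval_measure_step_cdf integral_distr lebesgue_integral_point_measure_finite)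

definition lagrange_basis :: "'a::field set \<Rightarrow> 'a \<Rightarrow> 'a poly" where
  "lagrange_basis X y = smult (inverse (\<Prod>u\<in>X - {y}. y - u)) (\<Prod>u\<in>X - {y}. [:- u, 1:])"

lemma poly_lagrange_basis:
  assumes "finite X" "y \<in> X" "x \<in> X"
  shows "poly (lagrange_basis X y) x = (if x = y then 1 else 0)"
  using assms by (auto simp: lagrange_basis_def poly_prod)

lemma degree_lagrange_basis:
  assumes "finite X" "y \<in> X"
  shows "degree (lagrange_basis X y) < card X"
proof -
  have "0 < card X"
    using assms card_gt_0_iff by blast
  have "degree (lagrange_basis X y) \<le> degree (\<Prod>u\<in>X - {y}. [:- u, 1:])"
    unfolding lagrange_basis_def by (rule degree_smult_le)
  also have "\<dots> \<le> (\<Sum>u\<in>X - {y}. degree [:- u, 1:])"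
    using degree_prod_sum_le[of "X - {y}" "\<lambda>u. [:- u, 1:]"] assms(1) unfolding o_def by blast
  also have "\<dots> = card X - 1"
    using assms by simp
  finally show ?thesis
    using \<open>0 < card X\<close> by linarith
qed

lemma lagrange_interpolation:
  assumes "finite X" "degree r < card X"
  shows "poly r z = (\<Sum>x\<in>X. poly r x * poly (lagrange_basis X x) z)"
proof -
  have interpolant: "r = (\<Sum>y\<in>X. smult (poly r y) (lagrange_basis X y))"
  proof (rule poly_eqI_degree)
    fix x assume "x \<in> X"
    have "poly (\<Sum>y\<in>X. smult (poly r y) (lagrange_basis X y)) x = (\<Sum>y\<in>X. if y = x then poly r y else 0)"
      unfolding poly_sum using assms(1) \<open>x \<in> X\<close> by (intro sum.cong) (auto simp: poly_lagrange_basis)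
    then show "poly r x = poly (\<Sum>y\<in>X. smult (poly r y) (lagrange_basis X y)) x"
      using assms(1) \<open>x \<in> X\<close> by simp
  next
    show "degree (\<Sum>y\<in>X. smult (poly r y) (lagrange_basis X y)) < card X"
      using assms degree_lagrange_basis
      by (intro degree_sum_less) (auto intro: le_less_trans[OF degree_smult_le])
  qed (use assms in auto)
  have "poly r z = poly (\<Sum>y\<in>X. smult (poly r y) (lagrange_basis X y)) z"
    using interpolant by (rule arg_cong)
  also have "\<dots> = (\<Sum>x\<in>X. poly r x * poly (lagrange_basis X x) z)"
    by (simp add: poly_sum)
  finally show ?thesis .
qed

lemma sum_regroup_by_value:
  fixes w :: "'j \<Rightarrow> real"
  assumes "finite J" "finite X" "a ` J \<subseteq> X"
  shows "(\<Sum>j\<in>J. w j * f (a j)) = (\<Sum>x\<in>X. (\<Sum>j\<in>{j\<in>J. a j = x}. w j) * f x)"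
  using sum.group[OF assms, of "\<lambda>j. w j * f (a j)"]
  by (simp add: sum_distrib_right)

lemma sum_poly_eq_of_moments_eq:
  fixes q :: "real poly"
  assumes "\<forall>p<N. (\<Sum>j\<in>J. w j * a j ^ p) = (\<Sum>j\<in>J'. w' j * a' j ^ p)" "degree q < N"
  shows "(\<Sum>j\<in>J. w j * poly q (a j)) = (\<Sum>j\<in>J'. w' j * poly q (a' j))"
proof -
  have poly_q: "poly q z = (\<Sum>p<N. coeff q p * z ^ p)" for z
    unfolding poly_altdef using assms(2)
    by (intro sum.mono_neutral_left) (auto simp: coeff_eq_0)
  have expand: "(\<Sum>j\<in>I. v j * poly q (b j)) = (\<Sum>p<N. coeff q p * (\<Sum>j\<in>I. v j * b j ^ p))"
    for I :: "'c set" and v b :: "'c \<Rightarrow> real"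
    unfolding poly_q by (simp add: sum_distrib_left sum.swap[of _ I] mult_ac)
  show ?thesis
    unfolding expand using assms(1) by simp
qed

lemma sum_lagrange_basis_eq_mass:
  fixes v b :: "'j \<Rightarrow> real"
  assumes "finite I" "finite X" "b ` I \<subseteq> X" "y \<in> X"
  shows "(\<Sum>j\<in>I. v j * poly (lagrange_basis X y) (b j)) = (\<Sum>j\<in>{j\<in>I. b j = y}. v j)"
proof -
  have "(\<Sum>j\<in>I. v j * poly (lagrange_basis X y) (b j))
      = (\<Sum>x\<in>X. (\<Sum>j\<in>{j\<in>I. b j = x}. v j) * poly (lagrange_basis X y) x)"
    by (rule sum_regroup_by_value[OF assms(1-3)])
  also have "\<dots> = (\<Sum>x\<in>X. if x = y then (\<Sum>j\<in>{j\<in>I. b j = x}. v j) else 0)"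
    using assms(2,4) by (intro sum.cong) (simp_all add: poly_lagrange_basis)
  finally show ?thesis
    using assms(2,4) by simp
qed

text \<open>Testing against the Lagrange basis on the union of the atoms isolates the mass of each atom.\<close>

lemma step_cdf_eq_of_moments_eq:
  assumes J: "finite J" "finite J'"
    and moments: "\<forall>p<N. (\<Sum>j\<in>J. w j * a j ^ p) = (\<Sum>j\<in>J'. w' j * a' j ^ p)"
    and atoms: "card (a ` J \<union> a' ` J') \<le> N"
  shows "step_cdf J w a = step_cdf J' w' a'"
proof
  fix x
  define X where "X = a ` J \<union> a' ` J'"
  have X: "finite X" "a ` J \<subseteq> X" "a' ` J' \<subseteq> X"
    using J unfolding X_def by auto
  have mass: "(\<Sum>j\<in>{j\<in>J. a j = y}. w j) = (\<Sum>j\<in>{j\<in>J'. a' j = y}. w' j)" if "y \<in> X" for y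
  proof -
    have "(\<Sum>j\<in>J. w j * poly (lagrange_basis X y) (a j))
        = (\<Sum>j\<in>J'. w' j * poly (lagrange_basis X y) (a' j))"
      using moments degree_lagrange_basis[OF X(1) that] atoms unfolding X_def
      by (intro sum_poly_eq_of_moments_eq) auto
    then show ?thesis
      by (simp only: sum_lagrange_basis_eq_mass[OF J(1) X(1,2) that]
          sum_lagrange_basis_eq_mass[OF J(2) X(1,3) that])
  qed
  have "step_cdf J w a x = (\<Sum>y\<in>X. (\<Sum>j\<in>{j\<in>J. a j = y}. w j) * (if y \<le> x then 1 else 0))"
    unfolding step_cdf_def by (rule sum_regroup_by_value[OF J(1) X(1,2)])
  also have "\<dots> = (\<Sum>y\<in>X. (\<Sum>j\<in>{j\<in>J'. a' j = y}. w' j) * (if y \<le> x then 1 else 0))"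
    using mass by simp
  also have "\<dots> = step_cdf J' w' a' x"
    unfolding step_cdf_def by (rule sum_regroup_by_value[OF J(2) X(1,3), symmetric])
  finally show "step_cdf J w a x = step_cdf J' w' a' x" .
qed

text \<open>\<open>P\<close> is \<open>x\<^sup>k\<close> minus its orthogonal projection onto the polynomials of degree \<open>< k\<close>, in
  the \<open>L\<^sup>2\<close> space of the weights, which \<open>q \<mapsto> (\<surd>w\<^sub>i q(\<lambda>\<^sub>i))\<^sub>i\<close> embeds isometrically into
  \<open>real^'n\<close>.\<close>

lemma exists_orthogonal_poly:
  fixes w lam :: "'n::finite \<Rightarrow> real"
  assumes w: "\<forall>i. 0 \<le> w i" and k: "0 < k"
  obtains P where "degree P = k" "lead_coeff P = 1"
    "\<And>q. degree q < k \<Longrightarrow> (\<Sum>i\<in>UNIV. w i * poly P (lam i) * poly q (lam i)) = 0"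
proof -
  define ev :: "real poly \<Rightarrow> real^'n" where "ev q = (\<chi> i. sqrt (w i) * poly q (lam i))" for q
  define S where "S = ev ` {q. degree q < k}"
  have "subspace S"
    unfolding subspace_def S_def
  proof (intro conjI ballI allI)
    show "0 \<in> ev ` {q. degree q < k}"
      using k by (intro image_eqI[of _ _ 0]) (auto simp: ev_def vec_eq_iff)
  next
    fix x y assume "x \<in> ev ` {q. degree q < k}" "y \<in> ev ` {q. degree q < k}"
    then obtain p q where "degree p < k" "degree q < k" "x = ev p" "y = ev q" by blast
    then show "x + y \<in> ev ` {q. degree q < k}"
      by (intro image_eqI[of _ _ "p + q"]) (auto simp: ev_def vec_eq_iff algebra_simps degree_add_less)
  next
    fix c :: real and x assume "x \<in> ev ` {q. degree q < k}"
    then obtain p where "degree p < k" "x = ev p" by blast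
    then show "c *\<^sub>R x \<in> ev ` {q. degree q < k}"
      by (intro image_eqI[of _ _ "smult c p"]) (auto simp: ev_def vec_eq_iff)
  qed
  obtain y z where y: "y \<in> span S" and z: "\<And>u. u \<in> span S \<Longrightarrow> orthogonal z u"
    and decomp: "ev (monom 1 k) = y + z"
    using orthogonal_subspace_decomp_exists by blast
  have "y \<in> S"
    using y span_minimal[OF subset_refl \<open>subspace S\<close>] by blast
  then obtain q where q: "degree q < k" "y = ev q"
    unfolding S_def by blast
  define P where "P = monom 1 k - q"
  have "degree P = k"
    unfolding P_def using degree_add_eq_left[of "- q" "monom 1 k"] q(1) by (simp add: degree_monom_eq)
  moreover have "lead_coeff P = 1"
    using calculation q(1) by (simp add: P_def coeff_eq_0)
  moreover have "z = ev P"
    using decomp q(2) by (simp add: P_def ev_def vec_eq_iff algebra_simps)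
  moreover have "(\<Sum>i\<in>UNIV. w i * poly P (lam i) * poly r (lam i)) = 0" if "degree r < k" for r
  proof -
    have "ev r \<in> span S"
      unfolding S_def using that by (intro span_base) auto
    then have "ev P \<bullet> ev r = 0"
      using z \<open>z = ev P\<close> orthogonal_def by blast
    moreover have "ev P \<bullet> ev r = (\<Sum>i\<in>UNIV. w i * poly P (lam i) * poly r (lam i))"
      unfolding inner_vec_def ev_def using w
      by (intro sum.cong) (simp_all add: algebra_simps real_sqrt_mult[symmetric])
    ultimately show ?thesis by simp
  qed
  ultimately show ?thesis
    using that by blast
qed

lemma order_prod_linear_factors:
  assumes "finite Z"
  shows "order x (\<Prod>u\<in>Z. [:- u, 1:]) = (if x \<in> Z then 1 else 0)"
proof -
  have "(\<Prod>u\<in>Z. [:- u, 1:]) \<noteq> (0 :: 'a::idom poly)"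
    using assms by simp
  then have "order x (\<Prod>u\<in>Z. [:- u, 1:]) = count (proots (\<Prod>u\<in>Z. [:- u, 1 :: 'a:])) x"
    by simp
  also have "proots (\<Prod>u\<in>Z. [:- u, 1 :: 'a:]) = mset_set Z"
    by (simp add: proots_prod)
  finally show ?thesis
    using assms by simp
qed

lemma poly_pos_if_no_roots:
  fixes r :: "real poly"
  assumes "lead_coeff r > 0" "\<And>z. poly r z \<noteq> 0"
  shows "poly r x > 0"
proof -
  obtain N where N: "\<forall>y\<ge>N. lead_coeff r \<le> poly r y"
    using poly_pinfty_gt_lc assms(1) by blast
  define y where "y = max N x + 1"
  have "x < y" "N \<le> y"
    unfolding y_def by linarith+
  then have "poly r y > 0"
    using N assms(1) by (metis less_le_trans)
  show ?thesis
  proof (rule ccontr)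
    assume "\<not> poly r x > 0"
    then have "poly r x < 0"
      using assms(2)[of x] by linarith
    then show False
      using poly_IVT_pos[OF \<open>x < y\<close> _ \<open>poly r y > 0\<close>] assms(2) by blast
  qed
qed

lemma poly_nonneg_if_even_orders:
  fixes r :: "real poly"
  assumes "lead_coeff r > 0" "\<And>z. even (order z r)"
  shows "poly r x \<ge> 0"
  using assms
proof (induction "degree r" arbitrary: r rule: less_induct)
  case less
  show ?case
  proof (cases "\<exists>z. poly r z = 0")
    case True
    then obtain z where "poly r z = 0" by blast
    have "r \<noteq> 0"
      using less.prems(1) by (metis leading_coeff_0_iff less_irrefl)
    with \<open>poly r z = 0\<close> have "order z r \<noteq> 0"
      using order_root by blast
    with less.prems(2)[of z] have "2 \<le> order z r"
      by presburger
    then obtain r' where r': "r = [:- z, 1:] ^ 2 * r'"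
      by (metis order_divides dvdE)
    with \<open>r \<noteq> 0\<close> have "r' \<noteq> 0" by (metis mult_zero_right)
    have "even (order y r')" for y
    proof -
      have "order y r = order y ([:- z, 1:] ^ 2) + order y r'"
        using r' \<open>r' \<noteq> 0\<close> by (simp add: order_mult)
      moreover have "even (order y ([:- z, 1:] ^ 2))"
        using order_power_n_n[of z 2] order_0I[of "[:- z, 1:] ^ 2" y] by (cases "y = z") simp_all
      ultimately show ?thesis
        using less.prems(2)[of y] by (metis even_add)
    qed
    moreover have "degree r' < degree r"
      using r' \<open>r' \<noteq> 0\<close> by (simp add: degree_mult_eq degree_linear_power)
    moreover have "lead_coeff r' > 0"
      using r' less.prems(1) by (simp add: lead_coeff_mult lead_coeff_power)
    ultimately have "poly r' x \<ge> 0"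
      using less.hyps by blast
    then show ?thesis
      using r' by simp
  next
    case False
    then show ?thesis
      using poly_pos_if_no_roots[OF less.prems(1)] less_imp_le by blast
  qed
qed

text \<open>Orthogonality to \<open>q\<close> makes the sum of the nonnegative terms \<open>w\<^sub>i (P q)(\<lambda>\<^sub>i)\<close> vanish,
  so \<open>P q\<close> vanishes on the support, which has more points than \<open>P\<close> has roots.\<close>

lemma root_of_nonneg_orthogonal_poly_product:
  fixes w lam :: "'n::finite \<Rightarrow> real"
  assumes w: "\<forall>i. 0 \<le> w i" and P: "degree P = k" "P \<noteq> 0"
    and orth: "\<And>q. degree q < k \<Longrightarrow> (\<Sum>i\<in>UNIV. w i * poly P (lam i) * poly q (lam i)) = 0"
    and support: "k < card (lam ` {i. 0 < w i})"
    and q: "degree q < k" and nonneg: "\<And>x. 0 \<le> poly (P * q) x"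
  obtains x where "poly q x = 0" "poly P x \<noteq> 0"
proof -
  have "(\<Sum>i\<in>UNIV. w i * poly (P * q) (lam i)) = 0"
    using orth[OF q] by (simp add: mult.assoc)
  moreover have "0 \<le> w i * poly (P * q) (lam i)" for i
    using nonneg w by simp
  ultimately have vanish: "w i * poly (P * q) (lam i) = 0" for i
    by (simp add: sum_nonneg_eq_0_iff)
  have "\<not> lam ` {i. 0 < w i} \<subseteq> {x. poly P x = 0}"
  proof
    assume "lam ` {i. 0 < w i} \<subseteq> {x. poly P x = 0}"
    then have "card (lam ` {i. 0 < w i}) \<le> card {x. poly P x = 0}"
      using poly_roots_finite[OF P(2)] by (rule card_mono[rotated])
    with support card_poly_roots_bound[OF P(2)] P(1) show False
      by linarith
  qed
  then obtain i where "0 < w i" "poly P (lam i) \<noteq> 0"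
    by blast
  with vanish[of i] have "poly q (lam i) = 0"
    by simp
  with \<open>poly P (lam i) \<noteq> 0\<close> show ?thesis
    using that by blast
qed

text \<open>Otherwise the monic polynomial \<open>q\<close> whose roots are the roots of odd order of \<open>P\<close> would make
  all root orders of \<open>P q\<close> even.\<close>

lemma card_roots_orthogonal_poly:
  fixes w lam :: "'n::finite \<Rightarrow> real"
  assumes w: "\<forall>i. 0 \<le> w i" and P: "degree P = k" "lead_coeff P = 1"
    and orth: "\<And>q. degree q < k \<Longrightarrow> (\<Sum>i\<in>UNIV. w i * poly P (lam i) * poly q (lam i)) = 0"
    and support: "k < card (lam ` {i. 0 < w i})"
  shows "card {x. poly P x = 0} = k"
proof -
  define R where "R = {x. poly P x = 0}"
  define Z where "Z = {x\<in>R. odd (order x P)}"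
  have "P \<noteq> 0"
    using P by auto
  then have "finite R" "card R \<le> k"
    unfolding R_def using P(1) poly_roots_finite card_poly_roots_bound by auto
  then have "finite Z"
    unfolding Z_def by simp
  have "k \<le> card Z"
  proof (rule ccontr)
    assume "\<not> k \<le> card Z"
    define q where "q = (\<Prod>u\<in>Z. [:- u, 1 :: real:])"
    have "degree q < k"
      unfolding q_def using degree_prod_sum_le[OF \<open>finite Z\<close>, of "\<lambda>u. [:- u, 1:]"] \<open>\<not> k \<le> card Z\<close>
      by simp
    have "lead_coeff (P * q) > 0"
      using P by (simp add: q_def lead_coeff_mult lead_coeff_prod)
    moreover have "even (order x (P * q))" for x
    proof -
      have "order x (P * q) = order x P + (if x \<in> Z then 1 else 0)"
        using \<open>P \<noteq> 0\<close> \<open>finite Z\<close> by (simp add: q_def order_mult order_prod_linear_factors)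
      moreover have "even (order x P)" if "x \<notin> Z"
      proof (cases "poly P x = 0")
        case True
        with that show ?thesis
          unfolding Z_def R_def by simp
      qed (simp add: order_0I)
      ultimately show ?thesis
        unfolding Z_def by auto
    qed
    ultimately have "poly (P * q) x \<ge> 0" for x
      by (rule poly_nonneg_if_even_orders)
    then obtain x where "poly q x = 0" "poly P x \<noteq> 0"
      using root_of_nonneg_orthogonal_poly_product[OF w P(1) \<open>P \<noteq> 0\<close> orth support \<open>degree q < k\<close>] by blast
    then show False
      using \<open>finite Z\<close> unfolding q_def Z_def R_def by (simp add: poly_prod)
  qed
  moreover have "card Z \<le> card R"
    unfolding Z_def using \<open>finite R\<close> by (intro card_mono) auto
  ultimately show ?thesis
    using \<open>card R \<le> k\<close> unfolding R_def by simp
qed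

lemma interpolatory_quadrature_exact:
  fixes w lam :: "'n::finite \<Rightarrow> real"
  assumes "finite X" "degree r < card X"
  shows "(\<Sum>i\<in>UNIV. w i * poly r (lam i))
    = (\<Sum>x\<in>X. (\<Sum>i\<in>UNIV. w i * poly (lagrange_basis X x) (lam i)) * poly r x)"
proof -
  have "w i * poly r (lam i) = w i * (\<Sum>x\<in>X. poly r x * poly (lagrange_basis X x) (lam i))" for i
    by (intro arg_cong[where f = "(*) (w i)"] lagrange_interpolation assms)
  then have "(\<Sum>i\<in>UNIV. w i * poly r (lam i))
      = (\<Sum>i\<in>UNIV. w i * (\<Sum>x\<in>X. poly r x * poly (lagrange_basis X x) (lam i)))"
    by (intro sum.cong) (simp_all only:)
  also have "\<dots> = (\<Sum>x\<in>X. (\<Sum>i\<in>UNIV. w i * poly (lagrange_basis X x) (lam i)) * poly r x)"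
    by (simp add: sum_distrib_left sum_distrib_right sum.swap[of _ X] mult_ac)
  finally show ?thesis .
qed

text \<open>Dividing by \<open>P\<close> extends exactness from degree \<open>< k\<close> to degree \<open>< 2k\<close>: the quotient
  is annihilated by orthogonality and the nodes are roots of \<open>P\<close>.\<close>

lemma quadrature_exact_double_degree:
  fixes w lam :: "'n::finite \<Rightarrow> real"
  assumes P: "degree P = k" and roots: "\<forall>x\<in>X. poly P x = 0"
    and orth: "\<And>q. degree q < k \<Longrightarrow> (\<Sum>i\<in>UNIV. w i * poly P (lam i) * poly q (lam i)) = 0"
    and exact: "\<And>r. degree r < k \<Longrightarrow> (\<Sum>i\<in>UNIV. w i * poly r (lam i)) = (\<Sum>x\<in>X. e x * poly r x)"
    and q: "degree q < 2 * k"
  shows "(\<Sum>i\<in>UNIV. w i * poly q (lam i)) = (\<Sum>x\<in>X. e x * poly q x)"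
proof -
  have "0 < k" "P \<noteq> 0"
    using q P by auto
  define s where "s = q div P"
  define r where "r = q mod P"
  have q_eq: "q = s * P + r"
    unfolding s_def r_def by simp
  have "degree r < k"
    using degree_mod_less'[OF \<open>P \<noteq> 0\<close>, of q] P \<open>0 < k\<close> unfolding r_def
    by (cases "q mod P = 0") simp_all
  have "degree s < k"
  proof (cases "s = 0")
    case False
    then have "degree s + k = degree (q - r)"
      using q_eq \<open>P \<noteq> 0\<close> P by (simp add: degree_mult_eq)
    also have "\<dots> < 2 * k"
      using q \<open>degree r < k\<close> degree_diff_le_max[of q r] by linarith
    finally show ?thesis by simp
  qed (use \<open>0 < k\<close> in simp)
  have "(\<Sum>i\<in>UNIV. w i * poly q (lam i))
      = (\<Sum>i\<in>UNIV. w i * poly P (lam i) * poly s (lam i)) + (\<Sum>i\<in>UNIV. w i * poly r (lam i))"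
    by (subst q_eq) (simp add: sum.distrib[symmetric] algebra_simps)
  also have "\<dots> = (\<Sum>x\<in>X. e x * poly r x)"
    using orth[OF \<open>degree s < k\<close>] exact[OF \<open>degree r < k\<close>] by simp
  also have "\<dots> = (\<Sum>x\<in>X. e x * poly q x)"
    using roots by (intro sum.cong) (simp_all add: q_eq)
  finally show ?thesis .
qed

lemma gauss_quadrature_on_roots:
  fixes w lam :: "'n::finite \<Rightarrow> real"
  assumes w: "\<forall>i. 0 \<le> w i" and P: "degree P = k" "0 < k"
    and orth: "\<And>q. degree q < k \<Longrightarrow> (\<Sum>i\<in>UNIV. w i * poly P (lam i) * poly q (lam i)) = 0"
    and roots: "card {x. poly P x = 0} = k"
  obtains e where "\<forall>x\<in>{x. poly P x = 0}. 0 \<le> e x"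
    "\<And>q. degree q < 2 * k \<Longrightarrow> (\<Sum>i\<in>UNIV. w i * poly q (lam i)) = (\<Sum>x\<in>{x. poly P x = 0}. e x * poly q x)"
proof -
  define X where "X = {x. poly P x = 0}"
  define e where "e x = (\<Sum>i\<in>UNIV. w i * poly (lagrange_basis X x) (lam i))" for x
  have "finite X"
    unfolding X_def using P by (intro poly_roots_finite) auto
  have exact: "(\<Sum>i\<in>UNIV. w i * poly q (lam i)) = (\<Sum>x\<in>X. e x * poly q x)" if "degree q < 2 * k" for q
  proof (rule quadrature_exact_double_degree[OF P(1) _ orth _ that])
    show "\<forall>x\<in>X. poly P x = 0"
      unfolding X_def by simp
    show "(\<Sum>i\<in>UNIV. w i * poly r (lam i)) = (\<Sum>x\<in>X. e x * poly r x)" if "degree r < k" for r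
      unfolding e_def using \<open>finite X\<close> that roots
      by (intro interpolatory_quadrature_exact) (auto simp: X_def)
  qed
  have "0 \<le> e x" if "x \<in> X" for x
  proof -
    have "degree (lagrange_basis X x * lagrange_basis X x) < 2 * k"
      using degree_mult_le[of "lagrange_basis X x" "lagrange_basis X x"]
        degree_lagrange_basis[OF \<open>finite X\<close> that] roots unfolding X_def by linarith
    from exact[OF this]
    have "(\<Sum>i\<in>UNIV. w i * (poly (lagrange_basis X x) (lam i))\<^sup>2)
        = (\<Sum>y\<in>X. e y * (poly (lagrange_basis X x) y)\<^sup>2)"
      by (simp add: power2_eq_square)
    also have "\<dots> = (\<Sum>y\<in>X. if y = x then e y else 0)"
      using \<open>finite X\<close> that by (intro sum.cong) (simp_all add: poly_lagrange_basis)
    also have "\<dots> = e x"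
      using \<open>finite X\<close> that by simp
    finally have "e x = (\<Sum>i\<in>UNIV. w i * (poly (lagrange_basis X x) (lam i))\<^sup>2)" ..
    also have "\<dots> \<ge> 0"
      using w by (intro sum_nonneg) simp
    finally show ?thesis .
  qed
  with exact show ?thesis
    using that unfolding X_def by blast
qed

lemma gauss_quadrature_exists:
  fixes w lam :: "'n::finite \<Rightarrow> real"
  assumes w: "\<forall>i. 0 \<le> w i" and k: "0 < k"
  obtains X e where "finite X" "card X \<le> k" "\<forall>x\<in>X. 0 \<le> e x"
    "\<forall>p<2 * k. (\<Sum>x\<in>X. e x * x ^ p) = (\<Sum>i\<in>UNIV. w i * lam i ^ p)"
proof (cases "card (lam ` {i. 0 < w i}) \<le> k")
  case True
  define e where "e x = (\<Sum>i\<in>{i\<in>{i. 0 < w i}. lam i = x}. w i)" for x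
  have "(\<Sum>x\<in>lam ` {i. 0 < w i}. e x * x ^ p) = (\<Sum>i\<in>UNIV. w i * lam i ^ p)" for p
  proof -
    have "(\<Sum>x\<in>lam ` {i. 0 < w i}. e x * x ^ p) = (\<Sum>i\<in>{i. 0 < w i}. w i * lam i ^ p)"
      unfolding e_def by (rule sum_regroup_by_value[symmetric]) auto
    also have "\<dots> = (\<Sum>i\<in>UNIV. w i * lam i ^ p)"
      using w by (intro sum.mono_neutral_left) (auto simp: order.order_iff_strict)
    finally show ?thesis .
  qed
  moreover have "\<forall>x\<in>lam ` {i. 0 < w i}. 0 \<le> e x"
    unfolding e_def by (auto intro: sum_nonneg)
  ultimately show ?thesis
    using that[of "lam ` {i. 0 < w i}" e] True by simp
next
  case False
  obtain P where P: "degree P = k" "lead_coeff P = 1"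
    and orth: "\<And>q. degree q < k \<Longrightarrow> (\<Sum>i\<in>UNIV. w i * poly P (lam i) * poly q (lam i)) = 0"
    using exists_orthogonal_poly[OF w k] by blast
  have roots: "card {x. poly P x = 0} = k"
    using card_roots_orthogonal_poly[OF w P orth] False by simp
  obtain e where "\<forall>x\<in>{x. poly P x = 0}. 0 \<le> e x"
    and exact: "\<And>q. degree q < 2 * k \<Longrightarrow> (\<Sum>i\<in>UNIV. w i * poly q (lam i)) = (\<Sum>x\<in>{x. poly P x = 0}. e x * poly q x)"
    using gauss_quadrature_on_roots[OF w P(1) k orth roots] by blast
  moreover have "finite {x. poly P x = 0}"
    using P by (intro poly_roots_finite) auto
  moreover have "\<forall>p<2 * k. (\<Sum>x\<in>{x. poly P x = 0}. e x * x ^ p) = (\<Sum>i\<in>UNIV. w i * lam i ^ p)"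
  proof (intro allI impI)
    fix p assume "p < 2 * k"
    then have "degree (monom (1 :: real) p) < 2 * k"
      by (simp add: degree_monom_eq)
    from exact[OF this] show "(\<Sum>x\<in>{x. poly P x = 0}. e x * x ^ p) = (\<Sum>i\<in>UNIV. w i * lam i ^ p)"
      by (simp add: poly_monom)
  qed
  ultimately show ?thesis
    using that[of "{x. poly P x = 0}" e] roots by simp
qed

lemma exists_nat_indexed_weights:
  assumes "finite X" "card X \<le> k" "\<forall>x\<in>X. 0 \<le> e x"
  obtains d \<theta> where "\<forall>j. 0 \<le> (d j :: real)"
    "\<And>f. (\<Sum>j<k. d j * f (\<theta> j)) = (\<Sum>x\<in>X. e x * f x)"
proof -
  obtain h where h: "bij_betw h {..<card X} X"
    using ex_bij_betw_nat_finite[OF assms(1)] atLeast0LessThan by auto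
  define d where "d j = (if j < card X then e (h j) else 0)" for j
  have "(\<Sum>j<k. d j * f (h j)) = (\<Sum>x\<in>X. e x * f x)" for f
  proof -
    have "(\<Sum>j<k. d j * f (h j)) = (\<Sum>j<card X. d j * f (h j))"
      using assms(2) by (intro sum.mono_neutral_right) (auto simp: d_def)
    also have "\<dots> = (\<Sum>j<card X. e (h j) * f (h j))"
      by (simp add: d_def)
    also have "\<dots> = (\<Sum>x\<in>X. e x * f x)"
      by (rule sum.reindex_bij_betw[OF h])
    finally show ?thesis .
  qed
  moreover have "\<forall>j. 0 \<le> d j"
    using assms(3) h by (auto simp: d_def bij_betw_def)
  ultimately show ?thesis
    using that by blast
qed

lemma moment_step_dist:
  assumes "\<forall>j. 0 \<le> d j"
  shows "moment (step_dist k d \<theta>) p = (\<Sum>j<k. d j * \<theta> j ^ p)"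
  unfolding step_dist_eq_step_cdf using assms by (intro moment_step_cdf) auto

text \<open>The description in \<open>GQ_def\<close> is unique: two \<open>k\<close>-atom distributions with the same moments up
  to degree \<open>2k - 1\<close> coincide.\<close>

lemma GQ_eqI:
  assumes d: "\<forall>j. 0 \<le> d j" and moments: "\<forall>p<2 * k. moment (step_dist k d \<theta>) p = moment \<mu> p"
  shows "GQ k \<mu> = step_dist k d \<theta>"
  unfolding GQ_def
proof (rule the_equality)
  fix G
  assume "(\<exists>d' \<theta>'. (\<forall>j. 0 \<le> d' j) \<and> G = step_dist k d' \<theta>') \<and> (\<forall>p<2 * k. moment G p = moment \<mu> p)"
  then obtain d' \<theta>' where d': "\<forall>j. 0 \<le> d' j" and G: "G = step_dist k d' \<theta>'"
    and "\<forall>p<2 * k. moment G p = moment \<mu> p"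
    by blast
  then have "\<forall>p<2 * k. (\<Sum>j<k. d' j * \<theta>' j ^ p) = (\<Sum>j<k. d j * \<theta> j ^ p)"
    using moments by (simp add: moment_step_dist[OF d] moment_step_dist[OF d'])
  moreover have "card (\<theta>' ` {..<k} \<union> \<theta> ` {..<k}) \<le> 2 * k"
    using card_Un_le[of "\<theta>' ` {..<k}" "\<theta> ` {..<k}"] card_image_le[of "{..<k}" \<theta>]
      card_image_le[of "{..<k}" \<theta>'] by simp
  ultimately show "G = step_dist k d \<theta>"
    unfolding G step_dist_eq_step_cdf by (intro step_cdf_eq_of_moments_eq) auto
qed (use d moments in blast)

lemma GQ_step_cdf:
  fixes w lam :: "'n::finite \<Rightarrow> real"
  assumes w: "\<forall>i. 0 \<le> w i" and k: "0 < k"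
  obtains d \<theta> where "\<forall>j. 0 \<le> d j" "GQ k (step_cdf UNIV w lam) = step_dist k d \<theta>"
    "sum d {..<k} = sum w UNIV"
proof -
  obtain X e where X: "finite X" "card X \<le> k" "\<forall>x\<in>X. 0 \<le> e x"
    and moments_X: "\<forall>p<2 * k. (\<Sum>x\<in>X. e x * x ^ p) = (\<Sum>i\<in>UNIV. w i * lam i ^ p)"
    using gauss_quadrature_exists[OF w k] by blast
  obtain d \<theta> where d: "\<forall>j. 0 \<le> d j" and reindex: "\<And>f. (\<Sum>j<k. d j * f (\<theta> j)) = (\<Sum>x\<in>X. e x * f x)"
    using exists_nat_indexed_weights[OF X] by blast
  have moments: "\<forall>p<2 * k. (\<Sum>j<k. d j * \<theta> j ^ p) = (\<Sum>i\<in>UNIV. w i * lam i ^ p)"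
    using moments_X reindex[of "\<lambda>x. x ^ _"] by simp
  have "GQ k (step_cdf UNIV w lam) = step_dist k d \<theta>"
    using d moments w by (intro GQ_eqI) (simp_all add: moment_step_dist moment_step_cdf)
  moreover have "sum d {..<k} = sum w UNIV"
    using moments[rule_format, of 0] k by simp
  ultimately show ?thesis
    using that d by blast
qed

definition diag_mat :: "('n::finite \<Rightarrow> real) \<Rightarrow> real^'n^'n" where
  "diag_mat lam = (\<chi> i j. if i = j then lam i else 0)"

lemma sym_mat_diag_mat: "sym_mat (diag_mat lam)"
  unfolding sym_mat_def diag_mat_def transpose_def by (simp add: vec_eq_iff)

lemma diag_mat_mult_vec_component: "(diag_mat lam *v u) $ j = lam j * u $ j"
proof -
  have "(diag_mat lam *v u) $ j = (\<Sum>i\<in>UNIV. (if j = i then lam j else 0) * u $ i)"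
    unfolding diag_mat_def matrix_vector_mult_def by simp
  also have "\<dots> = (\<Sum>i\<in>UNIV. if i = j then lam j * u $ i else 0)"
    by (intro sum.cong) auto
  finally show ?thesis
    by simp
qed

lemma is_eig_list_diag_mat:
  fixes lam :: "'n::finite \<Rightarrow> real"
  shows "is_eig_list (diag_mat lam) lam"
  unfolding is_eig_list_def
proof (intro exI[of _ "\<lambda>i. axis i 1"] conjI allI)
  show "axis i (1::real) \<bullet> axis j 1 = (if i = j then 1 else 0)" for i j :: 'n
    by (simp add: inner_axis_axis)
  show "diag_mat lam *v axis i 1 = lam i *\<^sub>R axis i 1" for i
    by (simp add: vec_eq_iff diag_mat_mult_vec_component axis_def)
qed

text \<open>With distinct diagonal entries every eigenvector is supported on a single coordinate,
  and orthonormality makes these coordinates distinct.\<close>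

lemma eig_list_diag_mat_permutes:
  fixes lam :: "'n::finite \<Rightarrow> real"
  assumes inj: "inj lam" and eig: "is_eig_list (diag_mat lam) mu"
  obtains \<sigma> where "bij \<sigma>" "\<And>i. mu i = lam (\<sigma> i)"
proof -
  obtain U :: "'n \<Rightarrow> real^'n" where orthonormal: "\<And>i j. U i \<bullet> U j = (if i = j then 1 else 0)"
    and eigvec: "\<And>i. diag_mat lam *v U i = mu i *\<^sub>R U i"
    using eig unfolding is_eig_list_def by blast
  have component: "lam j * U i $ j = mu i * U i $ j" for i j
    using arg_cong[OF eigvec[of i], of "\<lambda>v. v $ j"] by (simp add: diag_mat_mult_vec_component)
  have "U i \<noteq> 0" for i
    using orthonormal[of i i] by auto
  then have "\<exists>j. U i $ j \<noteq> 0" for i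
    by (simp add: vec_eq_iff)
  then obtain \<sigma> where \<sigma>: "\<And>i. U i $ \<sigma> i \<noteq> 0"
    by metis
  have mu: "mu i = lam (\<sigma> i)" for i
    using component[of "\<sigma> i" i] \<sigma>[of i] by simp
  have support: "U i $ j = 0" if "j \<noteq> \<sigma> i" for i j
    using component[of j i] mu[of i] inj that by (auto dest: injD)
  have "inj \<sigma>"
  proof (rule injI)
    fix i i' assume "\<sigma> i = \<sigma> i'"
    then have "U i \<bullet> U i' = (\<Sum>j\<in>UNIV. if j = \<sigma> i then U i $ \<sigma> i * U i' $ \<sigma> i else 0)"
      unfolding inner_vec_def using support by (intro sum.cong) auto
    then have "U i \<bullet> U i' = U i $ \<sigma> i * U i' $ \<sigma> i"
      by simp
    then have "U i \<bullet> U i' \<noteq> 0"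
      using \<sigma>[of i] \<sigma>[of i'] \<open>\<sigma> i = \<sigma> i'\<close> by simp
    then show "i = i'"
      using orthonormal[of i i'] by presburger
  qed
  then have "bij \<sigma>"
    using finite_UNIV_inj_surj[of \<sigma>] by (simp add: bij_def)
  with mu that show ?thesis
    by blast
qed

lemma eigvals_diag_mat:
  fixes lam :: "'n::finite \<Rightarrow> real"
  assumes "inj lam"
  obtains \<sigma> where "bij \<sigma>" "\<And>i. eigvals (diag_mat lam) i = lam (\<sigma> i)"
proof -
  have "is_eig_list (diag_mat lam) (eigvals (diag_mat lam))"
    unfolding eigvals_def by (rule someI[of _ lam]) (rule is_eig_list_diag_mat)
  then show ?thesis
    using eig_list_diag_mat_permutes[OF assms] that by blast
qed

lemma CESM_diag_mat:
  fixes lam :: "'n::finite \<Rightarrow> real"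
  assumes "inj lam"
  shows "CESM (diag_mat lam) x = real (card {i. lam i \<le> x}) / real CARD('n)"
proof -
  obtain \<sigma> where \<sigma>: "bij \<sigma>" "\<And>i. eigvals (diag_mat lam) i = lam (\<sigma> i)"
    using eigvals_diag_mat[OF assms] by blast
  have "{i. eigvals (diag_mat lam) i \<le> x} = \<sigma> -` {i. lam i \<le> x}"
    using \<sigma>(2) by auto
  moreover have "card (\<sigma> -` {i. lam i \<le> x}) = card {i. lam i \<le> x}"
    using \<sigma>(1) by (intro card_vimage_inj) (auto simp: bij_def)
  ultimately show ?thesis
    unfolding CESM_def by simp
qed

lemma range_eigvals_diag_mat:
  fixes lam :: "'n::finite \<Rightarrow> real"
  assumes "inj lam"
  shows "range (eigvals (diag_mat lam)) = range lam"
proof -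
  obtain \<sigma> where \<sigma>: "bij \<sigma>" "\<And>i. eigvals (diag_mat lam) i = lam (\<sigma> i)"
    using eigvals_diag_mat[OF assms] by blast
  then have "range (eigvals (diag_mat lam)) = lam ` range \<sigma>"
    by (auto simp: image_def)
  then show ?thesis
    using \<sigma>(1) by (simp add: bij_def)
qed

lemma orth_proj_unique:
  assumes S: "subspace S" and w: "w \<in> S" and orth: "\<forall>u\<in>S. (v - w) \<bullet> u = 0"
  shows "orth_proj S v = w"
  unfolding orth_proj_def
proof (rule the_equality)
  fix w' assume w': "w' \<in> S \<and> (\<forall>u\<in>S. (v - w') \<bullet> u = 0)"
  have "w - w' \<in> S"
    using S w w' by (simp add: subspace_diff)
  then have "(w - w') \<bullet> (w - w') = (v - w') \<bullet> (w - w') - (v - w) \<bullet> (w - w')"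
    by (simp add: inner_diff_left)
  also have "\<dots> = 0"
    using \<open>w - w' \<in> S\<close> w' orth by simp
  finally show "w' = w" by simp
qed (use w orth in blast)

lemma WCESM_diag_mat: "WCESM (diag_mat lam) v = step_cdf UNIV (\<lambda>i. (v $ i)\<^sup>2) lam"
proof
  fix x
  define E where "E = {u. \<exists>l\<le>x. diag_mat lam *v u = l *\<^sub>R u}"
  define w where "w = (\<Sum>i\<in>{i. lam i \<le> x}. (v $ i) *\<^sub>R axis i (1::real))"
  have w_component: "w $ j = (if lam j \<le> x then v $ j else 0)" for j
    unfolding w_def by (simp add: sum_component axis_def if_distrib cong: if_cong)
  have "axis i 1 \<in> E" if "lam i \<le> x" for i
    unfolding E_def using that
    by (intro CollectI exI[of _ "lam i"]) (auto simp: vec_eq_iff diag_mat_mult_vec_component axis_def)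
  then have "w \<in> span E"
    unfolding w_def by (intro span_sum span_scale span_base) auto
  have "orthogonal (v - w) u" if "u \<in> E" for u
  proof -
    obtain l where "l \<le> x" and eigvec: "diag_mat lam *v u = l *\<^sub>R u"
      using \<open>u \<in> E\<close> unfolding E_def by blast
    have "u $ j = 0" if "\<not> lam j \<le> x" for j
    proof -
      have "lam j * u $ j = l * u $ j"
        using arg_cong[OF eigvec, of "\<lambda>v. v $ j"] by (simp add: diag_mat_mult_vec_component)
      moreover have "lam j \<noteq> l"
        using that \<open>l \<le> x\<close> by linarith
      ultimately show ?thesis
        by simp
    qed
    then show ?thesis
      unfolding orthogonal_def inner_vec_def by (intro sum.neutral) (simp add: w_component)
  qed
  then have "\<forall>u\<in>span E. (v - w) \<bullet> u = 0"
    using orthogonal_to_span unfolding orthogonal_def by blast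
  then have "orth_proj (eig_le_space (diag_mat lam) x) v = w"
    unfolding eig_le_space_def E_def[symmetric] using \<open>w \<in> span E\<close>
    by (intro orth_proj_unique) auto
  then show "WCESM (diag_mat lam) v x = step_cdf UNIV (\<lambda>i. (v $ i)\<^sup>2) lam x"
    unfolding WCESM_def inner_vec_def step_cdf_def
    by (intro sum.cong) (simp_all add: w_component power2_eq_square)
qed

lemma integrable_indicator_Ico: "integrable lborel (indicator {l..<u} :: real \<Rightarrow> real)"
  by (cases "l \<le> u") auto

lemma step_cdf_eq_mass_minus_indicators:
  assumes "\<forall>j\<in>J. L \<le> a j"
  shows "step_cdf J w a x = sum w J * indicator {L..} x - (\<Sum>j\<in>J. w j * indicator {L..<a j} x)"
proof -
  have "(if a j \<le> x then 1 else 0 :: real) = indicator {L..} x - indicator {L..<a j} x" if "j \<in> J" for j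
    using assms that by (auto simp: indicator_def)
  then have "step_cdf J w a x = (\<Sum>j\<in>J. w j * indicator {L..} x - w j * indicator {L..<a j} x)"
    unfolding step_cdf_def by (intro sum.cong) (simp_all add: right_diff_distrib)
  then show ?thesis
    by (simp add: sum_subtractf sum_distrib_right)
qed

text \<open>Two discrete distribution functions of equal total mass agree far to the left and far to
  the right, so their difference is a finite combination of indicators of bounded intervals.\<close>

lemma integrable_step_cdf_diff:
  assumes J: "finite J" "finite J'" and mass: "sum w J = sum w' J'"
  shows "integrable lborel (\<lambda>x. step_cdf J w a x - step_cdf J' w' a' x)"
proof -
  define L where "L = Min (a ` J \<union> a' ` J' \<union> {0})"
  have "\<forall>j\<in>J. L \<le> a j" "\<forall>j\<in>J'. L \<le> a' j"
    unfolding L_def using J by auto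
  then have "step_cdf J w a x - step_cdf J' w' a' x
      = (\<Sum>j\<in>J'. w' j * indicator {L..<a' j} x) - (\<Sum>j\<in>J. w j * indicator {L..<a j} x)" for x
    using mass by (simp add: step_cdf_eq_mass_minus_indicators)
  then show ?thesis
    by (simp add: integrable_indicator_Ico)
qed

lemma step_cdf_uniform:
  assumes "c \<le> n" "real c - 1 \<le> x" "x < real c"
  shows "step_cdf {..<n} (\<lambda>_. 1 / real n) real x = real c / real n"
proof -
  have "{m\<in>{..<n}. real m \<le> x} = {..<c}"
    using assms by auto
  then show ?thesis
    by (simp add: step_cdf_const_weight)
qed

lemma integral_indicator_abs_jump_ge:
  fixes F G :: "real \<Rightarrow> real"
  assumes "0 < h"
    and F: "\<forall>x\<in>{c - h..<c + h}. F x = y"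
    and G: "\<forall>x\<in>{c - h..<c}. G x = \<alpha>" "\<forall>x\<in>{c..<c + h}. G x = \<beta>"
  shows "h * \<bar>\<beta> - \<alpha>\<bar> \<le> (LINT x|lborel. indicator {c - h..<c + h} x * \<bar>G x - F x\<bar>)"
proof -
  have "indicator {c - h..<c + h} x * \<bar>G x - F x\<bar>
      = \<bar>\<alpha> - y\<bar> * indicator {c - h..<c} x + \<bar>\<beta> - y\<bar> * indicator {c..<c + h} x" for x
    using F G by (cases "x < c") (auto simp: indicator_def)
  then have "(LINT x|lborel. indicator {c - h..<c + h} x * \<bar>G x - F x\<bar>) = h * (\<bar>\<alpha> - y\<bar> + \<bar>\<beta> - y\<bar>)"
    using \<open>0 < h\<close> by (simp add: integrable_indicator_Ico algebra_simps)
  then show ?thesis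
    using \<open>0 < h\<close> by (simp add: mult_left_mono)
qed

lemma nat_floor_plus_half_eq:
  assumes "real c - 1/2 \<le> y" "y < real c + 1/2"
  shows "nat \<lfloor>y + 1/2\<rfloor> = c"
proof -
  have "\<lfloor>y + 1/2\<rfloor> = int c"
    using assms by (subst floor_eq_iff) auto
  then show ?thesis
    by simp
qed

lemma sum_indicator_half_unit_intervals_le_1:
  "(\<Sum>c\<in>C. indicator {real c - 1/2..<real c + 1/2} x) \<le> (1::real)"
proof (cases "finite C")
  case True
  define m where "m = nat \<lfloor>x + 1/2\<rfloor>"
  have "indicator {real c - 1/2..<real c + 1/2} x
      = (if c = m then indicator {real m - 1/2..<real m + 1/2} x else (0::real))" for c
    using nat_floor_plus_half_eq[of c x] by (auto simp: indicator_def m_def)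
  then have "(\<Sum>c\<in>C. indicator {real c - 1/2..<real c + 1/2} x)
      = (if m \<in> C then indicator {real m - 1/2..<real m + 1/2} x else (0::real))"
    using True by simp
  then show ?thesis
    by (simp add: indicator_def)
qed simp

lemma card_near_atoms_le:
  assumes "finite Q"
  shows "card {c\<in>{..<n}. \<exists>q\<in>Q. b q \<in> {real c - 1/2<..<real c + 1/2}} \<le> card (b ` Q)"
proof -
  have "{c\<in>{..<n}. \<exists>q\<in>Q. b q \<in> {real c - 1/2<..<real c + 1/2}} \<subseteq> (\<lambda>y. nat \<lfloor>y + 1/2\<rfloor>) ` b ` Q"
  proof
    fix c assume "c \<in> {c\<in>{..<n}. \<exists>q\<in>Q. b q \<in> {real c - 1/2<..<real c + 1/2}}"
    then obtain q where "q \<in> Q" "b q \<in> {real c - 1/2<..<real c + 1/2}"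
      by blast
    then have "c = nat \<lfloor>b q + 1/2\<rfloor>"
      using nat_floor_plus_half_eq[of c "b q"] by simp
    with \<open>q \<in> Q\<close> show "c \<in> (\<lambda>y. nat \<lfloor>y + 1/2\<rfloor>) ` b ` Q"
      by blast
  qed
  then have "card {c\<in>{..<n}. \<exists>q\<in>Q. b q \<in> {real c - 1/2<..<real c + 1/2}}
      \<le> card ((\<lambda>y. nat \<lfloor>y + 1/2\<rfloor>) ` b ` Q)"
    using assms by (intro card_mono) auto
  also have "\<dots> \<le> card (b ` Q)"
    using assms by (intro card_image_le) simp
  finally show ?thesis .
qed

text \<open>On \<open>[c - 1/2, c + 1/2)\<close> the function \<open>step_cdf Q a b\<close> is constant, while the uniform
  distribution function jumps by \<open>1/n\<close> at \<open>c\<close>.\<close>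

lemma integral_abs_uniform_minus_step_cdf_near_integer_ge:
  assumes "c < n" "\<forall>q\<in>Q. b q \<notin> {real c - 1/2<..<real c + 1/2}"
  shows "1 / (2 * real n) \<le> (LINT x|lborel. indicator {real c - 1/2..<real c + 1/2} x *
    \<bar>step_cdf {..<n} (\<lambda>_. 1 / real n) real x - step_cdf Q a b x\<bar>)"
proof -
  let ?U = "step_cdf {..<n} (\<lambda>_. 1 / real n) real" and ?F = "step_cdf Q a b"
  define y where "y = ?F (real c)"
  have "?F x = y" if "x \<in> {real c - 1/2..<real c + 1/2}" for x
    unfolding y_def step_cdf_def
  proof (intro sum.cong refl)
    fix q assume "q \<in> Q"
    with assms(2) that have "(b q \<le> x) = (b q \<le> real c)"
      by auto
    then show "a q * (if b q \<le> x then 1 else 0) = a q * (if b q \<le> real c then 1 else 0)"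
      by simp
  qed
  moreover have "?U x = real c / real n" if "x \<in> {real c - 1/2..<real c}" for x
    using assms(1) that by (intro step_cdf_uniform) auto
  moreover have "?U x = real (Suc c) / real n" if "x \<in> {real c..<real c + 1/2}" for x
    using assms(1) that by (intro step_cdf_uniform) auto
  ultimately have "1/2 * \<bar>real (Suc c) / real n - real c / real n\<bar>
      \<le> (LINT x|lborel. indicator {real c - 1/2..<real c + 1/2} x * \<bar>?U x - ?F x\<bar>)"
    by (intro integral_indicator_abs_jump_ge) auto
  then show ?thesis
    by (simp add: diff_divide_distrib[symmetric])
qed

lemma integral_abs_uniform_minus_step_cdf_ge:
  assumes n: "0 < n" and Q: "finite Q" and mass: "sum a Q = 1"
  shows "real (n - card (b ` Q)) / (2 * real n)
    \<le> (LINT x|lborel. \<bar>step_cdf {..<n} (\<lambda>_. 1 / real n) real x - step_cdf Q a b x\<bar>)"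
proof -
  define g where "g x = \<bar>step_cdf {..<n} (\<lambda>_. 1 / real n) real x - step_cdf Q a b x\<bar>" for x
  define I where "I c = {real c - 1/2..<real c + 1/2}" for c :: nat
  define Good where "Good = {c\<in>{..<n}. \<forall>q\<in>Q. b q \<notin> {real c - 1/2<..<real c + 1/2}}"
  have "integrable lborel g"
    unfolding g_def using n Q mass by (intro integrable_abs integrable_step_cdf_diff) auto
  then have integrable_near: "integrable lborel (\<lambda>x. indicator (I c) x * g x)" for c
    using integrable_mult_indicator[of "I c" lborel g] by (simp add: I_def)
  have "{..<n} - Good = {c\<in>{..<n}. \<exists>q\<in>Q. b q \<in> {real c - 1/2<..<real c + 1/2}}"
    unfolding Good_def by auto
  moreover have "card ({..<n} - Good) = n - card Good"
    unfolding Good_def by (subst card_Diff_subset) auto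
  ultimately have "n - card Good \<le> card (b ` Q)"
    using card_near_atoms_le[OF Q, of n b] by simp
  then have "real (n - card (b ` Q)) / (2 * real n) \<le> (\<Sum>c\<in>Good. 1 / (2 * real n))"
    using n by (simp add: divide_right_mono)
  also have "\<dots> \<le> (\<Sum>c\<in>Good. LINT x|lborel. indicator (I c) x * g x)"
    unfolding I_def g_def Good_def
    by (intro sum_mono integral_abs_uniform_minus_step_cdf_near_integer_ge) auto
  also have "\<dots> = (LINT x|lborel. (\<Sum>c\<in>Good. indicator (I c) x * g x))"
    using integrable_near by (intro Bochner_Integration.integral_sum[symmetric])
  also have "\<dots> \<le> (LINT x|lborel. g x)"
  proof (rule integral_mono)
    show "(\<Sum>c\<in>Good. indicator (I c) x * g x) \<le> g x" for x
    proof -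
      have "(\<Sum>c\<in>Good. indicator (I c) x * g x) = (\<Sum>c\<in>Good. indicator (I c) x) * g x"
        by (simp add: sum_distrib_right)
      also have "\<dots> \<le> 1 * g x"
        unfolding I_def g_def by (intro mult_right_mono sum_indicator_half_unit_intervals_le_1) simp
      finally show ?thesis
        by simp
    qed
  qed (use integrable_near \<open>integrable lborel g\<close> in auto)
  finally show ?thesis
    unfolding g_def .
qed

lemma dW_uniform_step_cdf_gt:
  assumes "finite Q" "sum a Q = 1" "2 * card (b ` Q) < n"
  shows "1/4 < dW (step_cdf {..<n} (\<lambda>_. 1 / real n) real) (step_cdf Q a b)"
proof -
  have "1/4 < real (n - card (b ` Q)) / (2 * real n)"
    using assms(3) by (simp add: field_simps of_nat_diff)
  also have "\<dots> \<le> dW (step_cdf {..<n} (\<lambda>_. 1 / real n) real) (step_cdf Q a b)"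
    unfolding dW_def using assms by (intro integral_abs_uniform_minus_step_cdf_ge) auto
  finally show ?thesis .
qed

lemma sum_square_components_eq_1:
  fixes v :: "real^'n"
  assumes "norm v = 1"
  shows "(\<Sum>j\<in>UNIV. (v $ j)\<^sup>2) = 1"
proof -
  have "(\<Sum>j\<in>UNIV. (v $ j)\<^sup>2) = v \<bullet> v"
    unfolding inner_vec_def by (simp add: power2_eq_square)
  also have "\<dots> = 1"
    using assms by (simp add: power2_norm_eq_inner[symmetric])
  finally show ?thesis .
qed

lemma GQ_WCESM_diag_mat:
  fixes lam :: "'n::finite \<Rightarrow> real"
  assumes "norm v = 1" "0 < k"
  shows "\<exists>d \<theta>. (\<forall>j. 0 \<le> d j) \<and> GQ k (WCESM (diag_mat lam) v) = step_dist k d \<theta> \<and> sum d {..<k} = 1"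
  using GQ_step_cdf[of "\<lambda>j. (v $ j)\<^sup>2" k lam] assms sum_square_components_eq_1
  unfolding WCESM_diag_mat by (metis zero_le_power2)

lemma scaled_sum_step_dist:
  "c * (\<Sum>i\<in>I. step_dist k (d i) (\<theta> i) x)
    = step_cdf (I \<times> {..<k}) (\<lambda>(i, j). c * d i j) (\<lambda>(i, j). \<theta> i j) x"
  unfolding step_dist_def step_cdf_def
  by (simp add: sum.cartesian_product sum_distrib_left split_def mult.assoc)

lemma mean_GQ_WCESM_diag_mat:
  fixes lam :: "'n::finite \<Rightarrow> real" and v :: "'i \<Rightarrow> real^'n"
  assumes I: "finite I" "I \<noteq> {}" and k: "0 < k" and v: "\<forall>i\<in>I. norm (v i) = 1"
  obtains Q :: "('i \<times> nat) set" and a b where "finite Q" "sum a Q = 1" "card (b ` Q) \<le> card I * k"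
    "(\<lambda>x. 1 / real (card I) * (\<Sum>i\<in>I. GQ k (WCESM (diag_mat lam) (v i)) x)) = step_cdf Q a b"
proof -
  have "\<forall>i\<in>I. \<exists>d \<theta>. (\<forall>j. 0 \<le> d j) \<and>
      GQ k (WCESM (diag_mat lam) (v i)) = step_dist k d \<theta> \<and> sum d {..<k} = 1"
    using GQ_WCESM_diag_mat[OF _ k] v by blast
  then obtain d \<theta> where d\<theta>: "\<forall>i\<in>I. (\<forall>j. 0 \<le> d i j) \<and>
      GQ k (WCESM (diag_mat lam) (v i)) = step_dist k (d i) (\<theta> i) \<and> sum (d i) {..<k} = 1"
    by metis
  define a where "a = (\<lambda>(i, j). 1 / real (card I) * d i j)"
  define b where "b = (\<lambda>(i, j). \<theta> i j)"
  have "sum a (I \<times> {..<k}) = (\<Sum>i\<in>I. 1 / real (card I) * sum (d i) {..<k})"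
    unfolding a_def by (simp add: sum.cartesian_product[symmetric] sum_distrib_left)
  also have "\<dots> = 1"
    using d\<theta> I by simp
  finally have mass: "sum a (I \<times> {..<k}) = 1" .
  have atoms: "card (b ` (I \<times> {..<k})) \<le> card I * k"
    using card_image_le[of "I \<times> {..<k}" b] I by (simp add: card_cartesian_product)
  have mean: "(\<lambda>x. 1 / real (card I) * (\<Sum>i\<in>I. GQ k (WCESM (diag_mat lam) (v i)) x))
      = step_cdf (I \<times> {..<k}) a b"
    unfolding a_def b_def scaled_sum_step_dist[symmetric] using d\<theta> by simp
  show ?thesis
    using that[OF _ mass atoms mean] I(1) by simp
qed

lemma CESM_diag_mat_of_bij:
  fixes h :: "'n::finite \<Rightarrow> nat"
  assumes h: "bij_betw h UNIV {..<CARD('n)}"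
  shows "CESM (diag_mat (\<lambda>i. real (h i))) = step_cdf {..<CARD('n)} (\<lambda>_. 1 / real CARD('n)) real"
proof
  fix x
  have "inj (\<lambda>i. real (h i))"
    using h unfolding bij_betw_def inj_def by simp
  have "h ` {i. real (h i) \<le> x} = {m\<in>{..<CARD('n)}. real m \<le> x}"
    using h unfolding bij_betw_def by auto
  moreover have "inj_on h {i. real (h i) \<le> x}"
    using h by (auto simp: bij_betw_def inj_on_def)
  ultimately have "card {i. real (h i) \<le> x} = card {m\<in>{..<CARD('n)}. real m \<le> x}"
    using card_image by fastforce
  then show "CESM (diag_mat (\<lambda>i. real (h i))) x = step_cdf {..<CARD('n)} (\<lambda>_. 1 / real CARD('n)) real x"
    unfolding CESM_diag_mat[OF \<open>inj (\<lambda>i. real (h i))\<close>] by (simp add: step_cdf_const_weight)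
qed

lemma eigval_spread_diag_mat_of_bij:
  fixes h :: "'n::finite \<Rightarrow> nat"
  assumes h: "bij_betw h UNIV {..<CARD('n)}"
  defines "A \<equiv> diag_mat (\<lambda>i. real (h i))"
  shows "\<bar>lam_max A - lam_min A\<bar> \<le> real CARD('n) - 1"
proof -
  have "inj (\<lambda>i. real (h i))"
    using h unfolding bij_betw_def inj_def by simp
  then have "lam_max A \<in> range (\<lambda>i. real (h i))" "lam_min A \<in> range (\<lambda>i. real (h i))"
    unfolding lam_max_def lam_min_def A_def range_eigvals_diag_mat[OF \<open>inj (\<lambda>i. real (h i))\<close>]
    by auto
  then obtain i i' where "lam_max A = real (h i)" "lam_min A = real (h i')"
    by blast
  moreover have "0 \<le> real (h i) \<and> real (h i) \<le> real CARD('n) - 1" for i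
  proof -
    have "h i < CARD('n)"
      using h by (auto simp: bij_betw_def)
    then show ?thesis
      by linarith
  qed
  ultimately show ?thesis
    by (smt (verit))
qed

lemma dW_CESM_mean_GQ_diag_mat_gt:
  fixes h :: "'n::finite \<Rightarrow> nat" and v :: "'i \<Rightarrow> real^'n"
  assumes h: "bij_betw h UNIV {..<CARD('n)}" and I: "finite I" "I \<noteq> {}"
    and k: "0 < k" and v: "\<forall>i\<in>I. norm (v i) = 1" and few: "2 * (card I * k) < CARD('n)"
  defines "A \<equiv> diag_mat (\<lambda>i. real (h i))"
  shows "1/4 < dW (CESM A) (\<lambda>x. 1 / real (card I) * (\<Sum>i\<in>I. GQ k (WCESM A (v i)) x))"
proof -
  obtain Q :: "('i \<times> nat) set" and a b where "finite Q" "sum a Q = 1" "card (b ` Q) \<le> card I * k"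
    and mean: "(\<lambda>x. 1 / real (card I) * (\<Sum>i\<in>I. GQ k (WCESM A (v i)) x)) = step_cdf Q a b"
    using mean_GQ_WCESM_diag_mat[OF I k v, of "\<lambda>i. real (h i)", folded A_def] by blast
  with few have "1/4 < dW (step_cdf {..<CARD('n)} (\<lambda>_. 1 / real CARD('n)) real) (step_cdf Q a b)"
    by (intro dW_uniform_step_cdf_gt) auto
  then show ?thesis
    unfolding mean unfolding A_def CESM_diag_mat_of_bij[OF h] .
qed

theorem theorem4:
  fixes t :: real
  assumes "0 < t" and "t < 1"
    and "CARD('n::finite) = nat \<lceil>1 / (4 * t)\<rceil>"
  shows "\<exists>A :: real^'n^'n. sym_mat A \<and>
     (\<forall>(nv::nat) (k::nat) (v :: nat \<Rightarrow> real^'n).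
        0 < nv \<longrightarrow> 0 < k \<longrightarrow> real (nv * k) < 1 / (8 * t) \<longrightarrow>
        (\<forall>i\<in>{1..nv}. norm (v i) = 1) \<longrightarrow>
        dW (CESM A) (\<lambda>x. (1 / real nv) * (\<Sum>i=1..nv. GQ k (WCESM A (v i)) x))
          > t * \<bar>lam_max A - lam_min A\<bar>)"
proof -
  have n: "1 / (4 * t) \<le> real CARD('n)" "real CARD('n) < 1 / (4 * t) + 1"
    unfolding assms(3) using assms(1) ceiling_correct[of "1 / (4 * t)"]
    by (simp_all add: of_nat_ceiling)
  obtain h :: "'n \<Rightarrow> nat" where h: "bij_betw h UNIV {..<CARD('n)}"
    using ex_bij_betw_finite_nat[of "UNIV :: 'n set"] atLeast0LessThan by auto
  define A where "A = diag_mat (\<lambda>i. real (h i))"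
  have "t * \<bar>lam_max A - lam_min A\<bar> \<le> t * (real CARD('n) - 1)"
    using eigval_spread_diag_mat_of_bij[OF h] assms(1) unfolding A_def by (simp add: mult_left_mono)
  also have "\<dots> < 1/4"
    using n(2) assms(1) by (simp add: field_simps)
  finally have spread: "t * \<bar>lam_max A - lam_min A\<bar> < 1/4" .
  show ?thesis
  proof (intro exI[of _ A] conjI allI impI)
    show "sym_mat A"
      unfolding A_def by (rule sym_mat_diag_mat)
    fix nv k :: nat and v :: "nat \<Rightarrow> real^'n"
    assume nv_k: "0 < nv" "0 < k" and few: "real (nv * k) < 1 / (8 * t)"
      and unit: "\<forall>i\<in>{1..nv}. norm (v i) = 1"
    have "real (2 * (nv * k)) < 2 * (1 / (8 * t))"
      using few by simp
    also have "\<dots> \<le> real CARD('n)"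
      using n(1) by simp
    finally have "2 * (nv * k) < CARD('n)"
      by (simp only: of_nat_less_iff)
    with nv_k unit have "1/4 < dW (CESM A) (\<lambda>x. (1 / real nv) * (\<Sum>i=1..nv. GQ k (WCESM A (v i)) x))"
      using dW_CESM_mean_GQ_diag_mat_gt[OF h, of "{1..nv}" k v] unfolding A_def by simp
    with spread show "dW (CESM A) (\<lambda>x. (1 / real nv) * (\<Sum>i=1..nv. GQ k (WCESM A (v i)) x))
        > t * \<bar>lam_max A - lam_min A\<bar>"
      by linarith
  qed
qed

end
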